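(* Let $R>0$ and $\Theta=(\alpha,\rho_r,\rho_d,\rho_s,\rho_0,T)$ with $\alpha>1$, $\rho_r,\rho_d,\rho_s,\rho_0>0$ and $T>1$ an integer. If $$\rho_r+2\rho_0\ \ge\ \frac{\alpha}{1+\lfloor\sqrt T\rfloor}+\frac{\alpha(1+\lfloor\sqrt T\rfloor)}{\lfloor\sqrt T\rfloor}\Big(2^{\frac{R}{1-\lfloor\sqrt T\rfloor/T}}-1\Big),$$ then every maximizer $(M,K,\tau)$ of $\zeta_{zf}(M,K,\tau,R,\Theta)$ over integers with $1\le K\le\tau<T$, $M>K$ satisfies $M=2$ and $K=1$; i.e. $M^\star_{zf}(R,\Theta)=2$, $K^\star_{zf}(R,\Theta)=1$.
   Context: For $M>K$, $1\le K\le\tau<T$ let $$\gamma_u=\frac{K+\tau}{2\tau(M-K)}\Big(2^{\frac{R}{K(1-\tau/T)}}-1\Big)+\sqrt{\Big(\frac{K+\tau}{2\tau(M-K)}\Big(2^{\frac{R}{K(1-\tau/T)}}-1\Big)\Big)^2+\frac{2^{\frac{R}{K(1-\tau/T)}}-1}{\tau(M-K)}}$$ and define $\zeta_{zf}(M,K,\tau,R,\Theta)>0$ by $$\frac{R}{\zeta_{zf}(M,K,\tau,R,\Theta)}=\alpha K\gamma_u+\rho_s+K\Big(\rho_d+\frac{8K^2\rho_0}{3T}\Big)+M\Big(\rho_r+2K\rho_0+\frac{4K^2\rho_0}{T}\Big).$$ $(M^\star_{zf},K^\star_{zf},\tau^\star)$ denotes the maximizer of $\zeta_{zf}$ over integers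 with $1\le K\le\tau<T$, $M>K$. *)

theory Defs
  imports Complex_Main
begin

definition gamma_u :: "nat \<Rightarrow> nat \<Rightarrow> nat \<Rightarrow> real \<Rightarrow> nat \<Rightarrow> real" where
  "gamma_u M K \<tau> R T =
     (let e = 2 powr (R / (real K * (1 - real \<tau> / real T))) - 1;
          a = (real K + real \<tau>) / (2 * real \<tau> * (real M - real K)) * e
      in a + sqrt (a\<^sup>2 + e / (real \<tau> * (real M - real K))))"

definition zeta_zf ::
  "nat \<Rightarrow> nat \<Rightarrow> nat \<Rightarrow> real \<Rightarrow> real \<Rightarrow> real \<Rightarrow> real \<Rightarrow> real \<Rightarrow> real \<Rightarrow> nat \<Rightarrow> real" where
  "zeta_zf M K \<tau> R \<alpha> \<rho>r \<rho>d \<rho>s \<rho>0 T =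
     R / (\<alpha> * real K * gamma_u M K \<tau> R T + \<rho>s
          + real K * (\<rho>d + 8 * (real K)\<^sup>2 * \<rho>0 / (3 * real T))
          + real M * (\<rho>r + 2 * real K * \<rho>0 + 4 * (real K)\<^sup>2 * \<rho>0 / real T))"

definition feasible :: "nat \<Rightarrow> nat \<Rightarrow> nat \<Rightarrow> nat \<Rightarrow> bool" where
  "feasible T M K \<tau> \<longleftrightarrow> 1 \<le> K \<and> K \<le> \<tau> \<and> \<tau> < T \<and> K < M"

end

theory Submission
  imports Defs
begin

text \<open>
  Since \<open>\<zeta>\<^sub>z\<^sub>f = R / D\<close> for a positive cost \<open>D\<close>, maximizing \<open>\<zeta>\<^sub>z\<^sub>f\<close> means minimizing \<open>D\<close>.
  Every term of \<open>D\<close> other than \<open>\<alpha> K \<gamma>\<^sub>u\<close> is increasing in \<open>M\<close> and \<open>K\<close>, and any feasible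
  triple other than \<open>M = 2, K = 1\<close> has \<open>M \<ge> 3\<close>; it therefore pays at least one extra copy of
  \<open>\<rho>\<^sub>r + 2\<rho>\<^sub>0\<close> compared with \<open>(2, 1, \<lfloor>\<surd>T\<rfloor>)\<close>. Bounding \<open>\<surd>(a\<^sup>2 + b) \<le> a + b/(2a)\<close> shows
  that the hypothesis makes \<open>\<alpha> \<gamma>\<^sub>u(2, 1, \<lfloor>\<surd>T\<rfloor>)\<close> no larger than that extra copy, so
  \<open>(2, 1, \<lfloor>\<surd>T\<rfloor>)\<close> is strictly cheaper than every other choice of \<open>(M, K)\<close>.
\<close>

definition zf_cost ::
  "nat \<Rightarrow> nat \<Rightarrow> nat \<Rightarrow> real \<Rightarrow> real \<Rightarrow> real \<Rightarrow> real \<Rightarrow> real \<Rightarrow> real \<Rightarrow> nat \<Rightarrow> real" where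
  "zf_cost M K \<tau> R \<alpha> \<rho>r \<rho>d \<rho>s \<rho>0 T =
     \<alpha> * real K * gamma_u M K \<tau> R T + \<rho>s
     + real K * (\<rho>d + 8 * (real K)\<^sup>2 * \<rho>0 / (3 * real T))
     + real M * (\<rho>r + 2 * real K * \<rho>0 + 4 * (real K)\<^sup>2 * \<rho>0 / real T)"

lemma zeta_zf_eq_div_zf_cost:
  "zeta_zf M K \<tau> R \<alpha> \<rho>r \<rho>d \<rho>s \<rho>0 T = R / zf_cost M K \<tau> R \<alpha> \<rho>r \<rho>d \<rho>s \<rho>0 T"
  unfolding zeta_zf_def zf_cost_def ..

lemma two_powr_minus_one_pos:
  fixes x :: real
  assumes "x > 0"
  shows "2 powr x - 1 > 0"
  using gr_one_powr[of 2 x] assms by simp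

lemma sqrt_add_le_tangent:
  fixes a b :: real
  assumes "a > 0" "b \<ge> 0"
  shows "sqrt (a\<^sup>2 + b) \<le> a + b / (2 * a)"
proof (rule real_le_lsqrt)
  show "a\<^sup>2 + b \<le> (a + b / (2 * a))\<^sup>2"
    using assms by (simp add: power2_eq_square field_simps)
qed (use assms in auto)

lemma gamma_u_pos:
  assumes "R > 0" "feasible T M K \<tau>"
  shows "gamma_u M K \<tau> R T > 0"
proof -
  from assms(2) have K: "1 \<le> real K" "real K \<le> real \<tau>" "real \<tau> < real T" "real K < real M"
    by (auto simp: feasible_def)
  define e where "e = 2 powr (R / (real K * (1 - real \<tau> / real T))) - 1"
  have "1 - real \<tau> / real T > 0"
    using K by (simp add: field_simps)
  then have e: "e > 0"
    unfolding e_def using assms(1) K by (intro two_powr_minus_one_pos) simp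
  define a where "a = (real K + real \<tau>) / (2 * real \<tau> * (real M - real K)) * e"
  have "a > 0"
    unfolding a_def using e K by simp
  moreover have "0 \<le> sqrt (a\<^sup>2 + e / (real \<tau> * (real M - real K)))"
    using e K by simp
  ultimately show ?thesis
    unfolding gamma_u_def Let_def e_def[symmetric] a_def[symmetric] by linarith
qed

lemma gamma_u_2_1_le:
  assumes "R > 0" "1 \<le> s" "s < T"
  shows "gamma_u 2 1 s R T
           \<le> 1 / (1 + real s) + (1 + real s) / real s * (2 powr (R / (1 - real s / real T)) - 1)"
proof -
  define e where "e = 2 powr (R / (1 - real s / real T)) - 1"
  have "1 - real s / real T > 0"
    using assms by (simp add: field_simps)
  then have e: "e > 0"
    unfolding e_def using assms(1) by (intro two_powr_minus_one_pos) simp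
  define a where "a = (1 + real s) / (2 * real s) * e"
  have a: "a > 0"
    using e assms unfolding a_def by simp
  have "gamma_u 2 1 s R T = a + sqrt (a\<^sup>2 + e / real s)"
    unfolding gamma_u_def Let_def e_def a_def by simp
  also have "\<dots> \<le> a + (a + (e / real s) / (2 * a))"
    using sqrt_add_le_tangent[OF a, of "e / real s"] e by simp
  also have "(e / real s) / (2 * a) = 1 / (1 + real s)"
  proof -
    have "e * (1 + real s) > 0"
      using e by simp
    then show ?thesis
      unfolding a_def using assms by (simp add: field_simps)
  qed
  also have "a + (a + 1 / (1 + real s)) = 1 / (1 + real s) + (1 + real s) / real s * e"
    unfolding a_def using assms by simp
  finally show ?thesis
    unfolding e_def .
qed

lemma floor_sqrt_bounds:
  assumes "T > 1"
  shows "1 \<le> nat \<lfloor>sqrt (real T)\<rfloor>" "nat \<lfloor>sqrt (real T)\<rfloor> < T"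
proof -
  have "1 < sqrt (real T)"
    using assms by simp
  then show "1 \<le> nat \<lfloor>sqrt (real T)\<rfloor>"
    by linarith
  have "sqrt (real T) * 1 < sqrt (real T) * sqrt (real T)"
    using \<open>1 < sqrt (real T)\<close> by (intro mult_strict_left_mono) auto
  then have "sqrt (real T) < real T"
    by simp
  then show "nat \<lfloor>sqrt (real T)\<rfloor> < T"
    by (simp add: nat_less_iff floor_less_iff)
qed

lemma zf_cost_gt_of_three_le:
  assumes "R > 0" "\<alpha> > 0" "\<rho>r \<ge> 0" "\<rho>d \<ge> 0" "\<rho>0 > 0" "feasible T M K \<tau>" "3 \<le> M"
  shows "zf_cost M K \<tau> R \<alpha> \<rho>r \<rho>d \<rho>s \<rho>0 T
           > \<rho>s + (\<rho>d + 8 * \<rho>0 / (3 * real T)) + 3 * (\<rho>r + 2 * \<rho>0 + 4 * \<rho>0 / real T)"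
proof -
  have K: "1 \<le> real K" "3 \<le> real M"
    using assms(6,7) by (auto simp: feasible_def)
  have T: "real T > 0"
    using assms(6) by (auto simp: feasible_def)
  have K2: "1 \<le> (real K)\<^sup>2"
    using K by simp
  have "\<alpha> * real K * gamma_u M K \<tau> R T > 0"
    using gamma_u_pos[OF assms(1,6)] assms(2) K by simp
  moreover have "\<rho>d + 8 * \<rho>0 / (3 * real T) \<le> real K * (\<rho>d + 8 * (real K)\<^sup>2 * \<rho>0 / (3 * real T))"
  proof -
    have "\<rho>d + 8 * \<rho>0 / (3 * real T) \<le> \<rho>d + 8 * (real K)\<^sup>2 * \<rho>0 / (3 * real T)"
      using K2 assms(5) T by (simp add: divide_right_mono)
    also have "\<dots> \<le> real K * (\<rho>d + 8 * (real K)\<^sup>2 * \<rho>0 / (3 * real T))"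
      using mult_right_mono[of 1 "real K" "\<rho>d + 8 * (real K)\<^sup>2 * \<rho>0 / (3 * real T)"] K assms T
      by simp
    finally show ?thesis .
  qed
  moreover have "3 * (\<rho>r + 2 * \<rho>0 + 4 * \<rho>0 / real T)
                   \<le> real M * (\<rho>r + 2 * real K * \<rho>0 + 4 * (real K)\<^sup>2 * \<rho>0 / real T)"
  proof (rule mult_mono)
    have "4 * \<rho>0 / real T \<le> 4 * (real K)\<^sup>2 * \<rho>0 / real T"
      using K2 assms(5) T by (simp add: divide_right_mono)
    moreover have "2 * \<rho>0 \<le> 2 * real K * \<rho>0"
      using K assms(5) by simp
    ultimately show "\<rho>r + 2 * \<rho>0 + 4 * \<rho>0 / real T \<le> \<rho>r + 2 * real K * \<rho>0 + 4 * (real K)\<^sup>2 * \<rho>0 / real T"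
      by linarith
  qed (use K assms T in auto)
  ultimately show ?thesis
    unfolding zf_cost_def by linarith
qed

lemma zf_cost_pos:
  assumes "R > 0" "\<alpha> > 0" "\<rho>r \<ge> 0" "\<rho>d \<ge> 0" "\<rho>s \<ge> 0" "\<rho>0 \<ge> 0" "feasible T M K \<tau>"
  shows "zf_cost M K \<tau> R \<alpha> \<rho>r \<rho>d \<rho>s \<rho>0 T > 0"
proof -
  have "\<alpha> * real K * gamma_u M K \<tau> R T > 0"
    using gamma_u_pos[OF assms(1,7)] assms(2,7) by (simp add: feasible_def)
  moreover have "0 \<le> real K * (\<rho>d + 8 * (real K)\<^sup>2 * \<rho>0 / (3 * real T))"
    using assms(4,6) by simp
  moreover have "0 \<le> real M * (\<rho>r + 2 * real K * \<rho>0 + 4 * (real K)\<^sup>2 * \<rho>0 / real T)"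
    using assms(3,6) by simp
  ultimately show ?thesis
    unfolding zf_cost_def using assms(5) by linarith
qed

lemma zf_cost_2_1_lt:
  assumes "R > 0" "\<alpha> > 0" "\<rho>r \<ge> 0" "\<rho>d \<ge> 0" "\<rho>0 > 0" "feasible T M K \<tau>" "3 \<le> M"
    and "\<alpha> * gamma_u 2 1 s R T \<le> \<rho>r + 2 * \<rho>0"
  shows "zf_cost 2 1 s R \<alpha> \<rho>r \<rho>d \<rho>s \<rho>0 T < zf_cost M K \<tau> R \<alpha> \<rho>r \<rho>d \<rho>s \<rho>0 T"
proof -
  have cost_2_1: "zf_cost 2 1 s R \<alpha> \<rho>r \<rho>d \<rho>s \<rho>0 T
      = \<alpha> * gamma_u 2 1 s R T + \<rho>s + (\<rho>d + 8 * \<rho>0 / (3 * real T))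
        + 2 * (\<rho>r + 2 * \<rho>0 + 4 * \<rho>0 / real T)"
    unfolding zf_cost_def by simp
  have "4 * \<rho>0 / real T > 0"
    using assms(5,6) by (simp add: feasible_def)
  moreover note zf_cost_gt_of_three_le[where \<rho>s = \<rho>s, OF assms(1-7)] assms(8)
  ultimately show ?thesis
    unfolding cost_2_1 by (simp add: algebra_simps)
qed

theorem theorem2:
  fixes R \<alpha> \<rho>r \<rho>d \<rho>s \<rho>0 :: real and T M K \<tau> :: nat
  assumes "R > 0" and "\<alpha> > 1" and "\<rho>r > 0" and "\<rho>d > 0" and "\<rho>s > 0" and "\<rho>0 > 0"
    and "T > 1"
    and "\<rho>r + 2 * \<rho>0 \<ge>
           \<alpha> / (1 + of_int \<lfloor>sqrt (real T)\<rfloor>)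
         + \<alpha> * (1 + of_int \<lfloor>sqrt (real T)\<rfloor>) / of_int \<lfloor>sqrt (real T)\<rfloor>
           * (2 powr (R / (1 - of_int \<lfloor>sqrt (real T)\<rfloor> / real T)) - 1)"
    and "feasible T M K \<tau>"
    and "\<forall>M' K' \<tau>'. feasible T M' K' \<tau>' \<longrightarrow>
           zeta_zf M' K' \<tau>' R \<alpha> \<rho>r \<rho>d \<rho>s \<rho>0 T \<le> zeta_zf M K \<tau> R \<alpha> \<rho>r \<rho>d \<rho>s \<rho>0 T"
  shows "M = 2 \<and> K = 1"
proof (rule ccontr)
  assume "\<not> (M = 2 \<and> K = 1)"
  with assms(9) have "3 \<le> M"
    by (auto simp: feasible_def)
  define s where "s = nat \<lfloor>sqrt (real T)\<rfloor>"
  have s: "1 \<le> s" "s < T" "of_int \<lfloor>sqrt (real T)\<rfloor> = real s"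
    using floor_sqrt_bounds[OF assms(7)] unfolding s_def by auto
  then have feasible_2_1: "feasible T 2 1 s"
    by (simp add: feasible_def)
  have "\<alpha> * gamma_u 2 1 s R T \<le> \<rho>r + 2 * \<rho>0"
    using mult_left_mono[OF gamma_u_2_1_le[OF assms(1) s(1,2)], of \<alpha>] assms(2,8)
    unfolding s(3) by (simp add: algebra_simps)
  then have "zf_cost 2 1 s R \<alpha> \<rho>r \<rho>d \<rho>s \<rho>0 T < zf_cost M K \<tau> R \<alpha> \<rho>r \<rho>d \<rho>s \<rho>0 T"
    using assms(1-6,9) \<open>3 \<le> M\<close> by (intro zf_cost_2_1_lt) simp_all
  moreover have "zf_cost 2 1 s R \<alpha> \<rho>r \<rho>d \<rho>s \<rho>0 T > 0"
    using assms(1-6) feasible_2_1 by (intro zf_cost_pos) simp_all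
  ultimately have "zeta_zf M K \<tau> R \<alpha> \<rho>r \<rho>d \<rho>s \<rho>0 T < zeta_zf 2 1 s R \<alpha> \<rho>r \<rho>d \<rho>s \<rho>0 T"
    unfolding zeta_zf_eq_div_zf_cost using assms(1) by (intro divide_strict_left_mono) auto
  moreover have "zeta_zf 2 1 s R \<alpha> \<rho>r \<rho>d \<rho>s \<rho>0 T \<le> zeta_zf M K \<tau> R \<alpha> \<rho>r \<rho>d \<rho>s \<rho>0 T"
    using assms(10) feasible_2_1 by blast
  ultimately show False
    by linarith
qed

end
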